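(* Let $\kappa$ be a cardinal with $\mathrm{cf}(\kappa)>\aleph_1$, and let $\mathcal{R}$ be any collection of $\kappa$ pairwise disjoint rays belonging to an end $\varepsilon$ of a graph $G$. Then there exist a set $U$ of vertices of $G$ with $|U|<\kappa$ and a collection $\mathcal{C}$ of $\kappa$ internally disjoint $\varepsilon$--$U$ combs in $G$ all of whose spines lie in $\mathcal{R}$.
   Context: A ray is a one-way infinite path; two rays are equivalent if there are infinitely many disjoint paths between them; an end is an equivalence class of rays. An $\varepsilon$--$U$ comb is a subgraph $C=R\cup\bigcup\mathcal{P}$ of $G$ consisting of a ray $R$ (its spine) disjoint from $U$ and belonging to $\varepsilon$, and an infinite family $\mathcal{P}$ of disjoint $R$--$U$ paths; its interior is $C-U$; two such combs are internally disjoint if their interiors are disjoint. *)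

theory Defs
  imports Main
begin

definition graph :: "'v set \<Rightarrow> ('v \<Rightarrow> 'v \<Rightarrow> bool) \<Rightarrow> bool" where
  "graph V E \<longleftrightarrow> (\<forall>x y. E x y \<longrightarrow> x \<in> V \<and> y \<in> V \<and> x \<noteq> y \<and> E y x)"

definition is_ray :: "'v set \<Rightarrow> ('v \<Rightarrow> 'v \<Rightarrow> bool) \<Rightarrow> (nat \<Rightarrow> 'v) \<Rightarrow> bool" where
  "is_ray V E R \<longleftrightarrow> inj R \<and> (\<forall>n. R n \<in> V) \<and> (\<forall>n. E (R n) (R (Suc n)))"

definition is_path :: "'v set \<Rightarrow> ('v \<Rightarrow> 'v \<Rightarrow> bool) \<Rightarrow> 'v list \<Rightarrow> bool" where
  "is_path V E p \<longleftrightarrow> p \<noteq> [] \<and> distinct p \<and> set p \<subseteq> V \<and>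
     (\<forall>i. Suc i < length p \<longrightarrow> E (p ! i) (p ! Suc i))"

definition AB_path :: "'v set \<Rightarrow> ('v \<Rightarrow> 'v \<Rightarrow> bool) \<Rightarrow> 'v set \<Rightarrow> 'v set \<Rightarrow> 'v list \<Rightarrow> bool" where
  "AB_path V E A B p \<longleftrightarrow> is_path V E p \<and> set p \<inter> A = {hd p} \<and> set p \<inter> B = {last p}"

definition disjoint_paths :: "'v list set \<Rightarrow> bool" where
  "disjoint_paths P \<longleftrightarrow> (\<forall>p\<in>P. \<forall>q\<in>P. p \<noteq> q \<longrightarrow> set p \<inter> set q = {})"

definition rays_equiv :: "'v set \<Rightarrow> ('v \<Rightarrow> 'v \<Rightarrow> bool) \<Rightarrow> (nat \<Rightarrow> 'v) \<Rightarrow> (nat \<Rightarrow> 'v) \<Rightarrow> bool" where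
  "rays_equiv V E R1 R2 \<longleftrightarrow> (\<exists>P. infinite P \<and> disjoint_paths P \<and>
      (\<forall>p\<in>P. AB_path V E (range R1) (range R2) p))"

definition is_end :: "'v set \<Rightarrow> ('v \<Rightarrow> 'v \<Rightarrow> bool) \<Rightarrow> (nat \<Rightarrow> 'v) set \<Rightarrow> bool" where
  "is_end V E \<epsilon> \<longleftrightarrow> (\<exists>R0. is_ray V E R0 \<and> \<epsilon> = {R. is_ray V E R \<and> rays_equiv V E R0 R})"

text \<open>An \<open>\<epsilon>\<close>--U comb, represented by its spine R and its family of teeth paths P;
  the comb itself is the subgraph R \<union> \<Union>P.\<close>
definition is_comb :: "'v set \<Rightarrow> ('v \<Rightarrow> 'v \<Rightarrow> bool) \<Rightarrow> (nat \<Rightarrow> 'v) set \<Rightarrow> 'v set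
    \<Rightarrow> (nat \<Rightarrow> 'v) \<times> 'v list set \<Rightarrow> bool" where
  "is_comb V E \<epsilon> U C \<longleftrightarrow> (case C of (R, P) \<Rightarrow>
     R \<in> \<epsilon> \<and> range R \<inter> U = {} \<and> infinite P \<and> disjoint_paths P \<and>
     (\<forall>p\<in>P. AB_path V E (range R) U p))"

definition comb_interior :: "'v set \<Rightarrow> (nat \<Rightarrow> 'v) \<times> 'v list set \<Rightarrow> 'v set" where
  "comb_interior U C = (case C of (R, P) \<Rightarrow> (range R \<union> \<Union>(set ` P)) - U)"

text \<open>cf(|A|) > aleph_1: no subset of size at most aleph_1 is cofinal in the
  initial well-order of A (card_of A).\<close>
definition cof_gt_aleph1 :: "'a set \<Rightarrow> bool" where
  "cof_gt_aleph1 A \<longleftrightarrow> \<not> (\<exists>S \<subseteq> A. (card_of S, cardSuc natLeq) \<in> ordLeq \<and>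
       (\<forall>a\<in>A. \<exists>b\<in>S. (a, b) \<in> card_of A))"

end

(*
  Fix a ray R0 of the end. Every R in the family is joined to R0 by infinitely many disjoint
  paths, and R together with these paths spans a countable vertex set X R.

  The core is a set-theoretic statement about a family of kappa = |I| countable sets X i with
  cf kappa > aleph_1, each containing a nonempty K i, the K i pairwise disjoint: some U with
  |U| < kappa admits kappa indices whose K i avoid U and whose X i are pairwise disjoint
  outside U. Otherwise every small U admits only a small maximal such family, and adding
  its sets to U transfinitely along omega_1 keeps U small, since a union of aleph_1 sets of
  size < kappa has size < kappa. Some K i then avoids the final set, so by maximality X i
  meets every one of the aleph_1 increments, which contradicts its countability.

  Applied to the sets X R with K R the vertex set of R, and with range R0 put into U, every
  path from R0 to a selected ray R meets U; reversed and cut at its first vertex in U, these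
  paths are the teeth of an epsilon--U comb with spine R, and the combs for distinct rays
  have disjoint interiors.
*)
theory Submission
  imports Defs "HOL-Library.Countable_Set_Type"
begin

unbundle cardinal_syntax

abbreviation aleph1 :: "nat set rel" where
  "aleph1 \<equiv> cardSuc natLeq"

section \<open>Cardinals of cofinality greater than aleph_1\<close>

lemma card_of_finite_ordLess_infinite: "finite A \<Longrightarrow> infinite C \<Longrightarrow> |A| <o |C|"
  using finite_ordLess_infinite[of "|A|" "|C|"] by (simp add: card_of_well_order_on Field_card_of)

lemma card_of_Times_ordLess_infinite:
  assumes "infinite C" and "|A| <o |C|" and "|B| <o |C|"
  shows "|A \<times> B| <o |C|"
proof (cases "finite A \<and> finite B")
  case True
  then have "finite (A \<times> B)" by simp
  then show ?thesis using assms(1) by (rule card_of_finite_ordLess_infinite)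
next
  case infinite: False
  show ?thesis
  proof (cases "A = {} \<or> B = {}")
    case True
    then have "finite (A \<times> B)" by auto
    then show ?thesis using assms(1) by (rule card_of_finite_ordLess_infinite)
  next
    case False
    consider (AB) "|A| \<le>o |B|" | (BA) "|B| \<le>o |A|"
      using ordLeq_total[OF card_of_Well_order card_of_Well_order] by blast
    then show ?thesis
    proof cases
      case AB
      then have "infinite B" using infinite card_of_ordLeq_finite by blast
      then have "|A \<times> B| =o |B|" using card_of_Times_infinite[of B A] AB False by simp
      then show ?thesis using assms(3) by (rule ordIso_ordLess_trans)
    next
      case BA
      then have "infinite A" using infinite card_of_ordLeq_finite by blast
      then have "|A \<times> B| =o |A|" using card_of_Times_infinite[of A B] BA False by simp
      then show ?thesis using assms(2) by (rule ordIso_ordLess_trans)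
    qed
  qed
qed

lemma card_of_UN_ordLess_infinite:
  assumes "infinite C" and "|A| <o |C|" and "|D| <o |C|"
    and "\<And>a. a \<in> A \<Longrightarrow> |B a| \<le>o |D|"
  shows "|\<Union>a\<in>A. B a| <o |C|"
proof -
  have "|\<Union>a\<in>A. B a| \<le>o |SIGMA a:A. B a|" by (rule card_of_UNION_Sigma)
  also have "|SIGMA a:A. B a| \<le>o |A \<times> D|" using assms(4) by (intro card_of_Sigma_mono1) simp
  finally show ?thesis
    using card_of_Times_ordLess_infinite[OF assms(1-3)] ordLeq_ordLess_trans by blast
qed

lemma cof_gt_aleph1_imp_aleph1_ordLess:
  assumes "cof_gt_aleph1 I"
  shows "aleph1 <o |I|"
proof -
  have "(a, a) \<in> |I|" if "a \<in> I" for a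
    using refl_onD[OF wo_rel.REFL[OF Card_order_wo_rel[OF card_of_Card_order]]] that
    by (simp add: Field_card_of)
  then have "\<not> |I| \<le>o aleph1"
    using assms unfolding cof_gt_aleph1_def by (blast intro: exI[of _ I])
  then show ?thesis
    using not_ordLeq_iff_ordLess card_of_Well_order cardSuc_Card_order natLeq_Card_order
      card_order_on_well_order_on by blast
qed

lemma countable_ordLess_cof_gt_aleph1:
  assumes "cof_gt_aleph1 I" and "countable A"
  shows "|A| <o |I|"
proof -
  have "|A| \<le>o natLeq" using assms(2) countable_card_of_nat card_of_nat ordLeq_ordIso_trans by blast
  also have "natLeq <o aleph1" by (rule cardSuc_greater[OF natLeq_Card_order])
  also have "aleph1 <o |I|" using assms(1) by (rule cof_gt_aleph1_imp_aleph1_ordLess)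
  finally show ?thesis .
qed

lemma cof_gt_aleph1_infinite: "cof_gt_aleph1 I \<Longrightarrow> infinite I"
  using countable_ordLess_cof_gt_aleph1[of I I] not_ordLess_ordIso ordIso_refl card_of_Card_order
  by (metis countable_finite)

lemma ordLess_card_of_imp_underS:
  assumes "|B| <o |I|"
  shows "\<exists>c\<in>I. |B| \<le>o |underS |I| c|"
proof -
  have "\<exists>c\<in>Field |I|. |B| =o Restr |I| (underS |I| c)"
    using assms
    by (rule ordLess_iff_ordIso_Restr[OF card_of_Well_order card_of_Well_order, THEN iffD1])
  then obtain c where c: "c \<in> I" and iso: "|B| =o Restr |I| (underS |I| c)"
    unfolding Field_card_of by blast
  have "|B| \<le>o |Field (Restr |I| (underS |I| c))|"
    using card_of_mono2[OF ordIso_iff_ordLeq[THEN iffD1, OF iso, THEN conjunct1]]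
    unfolding Field_card_of .
  also have "|Field (Restr |I| (underS |I| c))| \<le>o |underS |I| c|"
    by (rule card_of_mono1) (auto simp: Field_def)
  finally show ?thesis using c by blast
qed

lemma cof_gt_aleph1_upper_bound:
  assumes "cof_gt_aleph1 I" and "S \<subseteq> I" and "|S| \<le>o aleph1"
  shows "\<exists>a\<in>I. \<forall>s\<in>S. underS |I| s \<subseteq> underS |I| a"
proof -
  interpret wo_rel "|I|" by (rule Card_order_wo_rel[OF card_of_Card_order])
  have "\<not> (\<forall>a\<in>I. \<exists>s\<in>S. (a, s) \<in> card_of I)"
    using assms unfolding cof_gt_aleph1_def by (blast intro: exI[of _ S])
  then obtain a where a: "a \<in> I" and above: "\<forall>s\<in>S. (a, s) \<notin> |I|" by blast
  have "(s, a) \<in> |I|" if "s \<in> S" for s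
    using TOTALS above a that assms(2) unfolding Field_card_of by blast
  then show ?thesis using a underS_incr[OF TRANS ANTISYM] by blast
qed

lemma card_of_UN_ordLess_cof_gt_aleph1:
  assumes cof: "cof_gt_aleph1 I" and "|A| \<le>o aleph1"
    and small: "\<And>a. a \<in> A \<Longrightarrow> |B a| <o |I|"
  shows "|\<Union>a\<in>A. B a| <o |I|"
proof -
  have "\<forall>a\<in>A. \<exists>c. c \<in> I \<and> |B a| \<le>o |underS |I| c|"
    using ordLess_card_of_imp_underS[OF small] by blast
  then obtain c where c: "\<forall>a\<in>A. c a \<in> I \<and> |B a| \<le>o |underS |I| (c a)|"
    by (rule bchoice[THEN exE])
  have "|c ` A| \<le>o aleph1" using card_of_image assms(2) by (rule ordLeq_transitive)
  then obtain a0 where a0: "a0 \<in> I" and sub: "\<forall>a\<in>A. underS |I| (c a) \<subseteq> underS |I| a0"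
    using cof_gt_aleph1_upper_bound[OF cof, of "c ` A"] c by blast
  have "|B a| \<le>o |underS |I| a0|" if "a \<in> A" for a
    using c sub that card_of_mono1 ordLeq_transitive by metis
  moreover have "|underS |I| a0| <o |I|"
    using card_of_underS[OF card_of_Card_order] a0 by (simp add: Field_card_of)
  moreover have "|A| <o |I|"
    using assms(2) cof_gt_aleph1_imp_aleph1_ordLess[OF cof] by (rule ordLeq_ordLess_trans)
  ultimately show ?thesis using card_of_UN_ordLess_infinite cof_gt_aleph1_infinite[OF cof] by blast
qed

lemma uncountable_Field_aleph1: "uncountable (Field aleph1)"
proof
  assume "countable (Field aleph1)"
  then have "|Field aleph1| \<le>o natLeq"
    using countable_card_of_nat card_of_nat ordLeq_ordIso_trans by blast
  moreover have "natLeq <o |Field aleph1|"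
    using cardSuc_greater[OF natLeq_Card_order]
      card_of_Field_ordIso[OF cardSuc_Card_order[OF natLeq_Card_order], THEN ordIso_symmetric]
    by (rule ordLess_ordIso_trans)
  ultimately show False using not_ordLess_ordLeq by blast
qed

lemma card_of_Field_aleph1: "|Field aleph1| \<le>o aleph1"
  by (rule ordIso_imp_ordLeq[OF card_of_Field_ordIso[OF cardSuc_Card_order[OF natLeq_Card_order]]])

section \<open>Transfinite chains of length omega_1\<close>

lemma well_order_cumulative_recursion:
  assumes "Well_order r"
  shows "\<exists>F. \<forall>x. F x = A \<union> (\<Union>y\<in>underS r x. G (F y))"
proof -
  interpret wo_rel r using assms by (rule wo_rel.intro)
  let ?H = "\<lambda>F x. A \<union> (\<Union>y\<in>underS x. G (F y))"
  have "adm_wo ?H" unfolding adm_wo_def by (auto intro!: SUP_cong)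
  then have "worec ?H = ?H (worec ?H)" by (rule worec_fixpoint)
  then show ?thesis by (intro exI[of _ "worec ?H"] allI) (rule fun_cong)
qed

lemma aleph1_increments_uncountable:
  assumes chain: "\<And>x y. x \<in> underS aleph1 y \<Longrightarrow> B x \<subseteq> A y"
    and meets: "\<And>x. x \<in> Field aleph1 \<Longrightarrow> Y \<inter> (B x - A x) \<noteq> {}"
  shows "uncountable Y"
proof
  assume "countable Y"
  have "\<forall>x\<in>Field aleph1. \<exists>v. v \<in> Y \<inter> (B x - A x)" using meets by blast
  then obtain g where g: "\<forall>x\<in>Field aleph1. g x \<in> Y \<inter> (B x - A x)" by (rule bchoice[THEN exE])
  have distinct: "g x \<noteq> g y" if "x \<in> underS aleph1 y" for x y
  proof -
    have "x \<in> Field aleph1" "y \<in> Field aleph1"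
      using that unfolding underS_def by (auto intro: FieldI1 FieldI2)
    then have "g x \<in> A y" "g y \<notin> A y" using g chain[OF that] by auto
    then show ?thesis by auto
  qed
  have "inj_on g (Field aleph1)"
  proof (rule inj_onI, rule ccontr)
    fix x y assume xy: "x \<in> Field aleph1" "y \<in> Field aleph1" "g x = g y" "x \<noteq> y"
    then have "x \<in> underS aleph1 y \<or> y \<in> underS aleph1 x"
      using wo_rel.TOTALS[OF Card_order_wo_rel[OF cardSuc_Card_order[OF natLeq_Card_order]]]
      unfolding underS_def by blast
    then show False using distinct xy(3) by metis
  qed
  moreover have "countable (g ` Field aleph1)"
    using g \<open>countable Y\<close> by (blast intro: countable_subset)
  ultimately show False using countable_image_inj_on uncountable_Field_aleph1 by blast
qed

lemma exists_small_aleph1_chain: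
  assumes cof: "cof_gt_aleph1 I" and "countable U0" and "U0 \<subseteq> W"
    and step: "\<And>U. U0 \<subseteq> U \<Longrightarrow> U \<subseteq> W \<Longrightarrow> |U| <o |I| \<Longrightarrow> step U \<subseteq> W \<and> |step U| <o |I|"
  shows "\<exists>F. (\<forall>x. |F x| <o |I| \<and> U0 \<subseteq> F x \<and> F x \<subseteq> W) \<and>
    (\<forall>y. \<forall>x\<in>underS aleph1 y. step (F x) \<subseteq> F y) \<and> |\<Union>x\<in>Field aleph1. step (F x)| <o |I|"
proof -
  have wo: "Well_order aleph1" by (rule cardSuc_Well_order[OF natLeq_Card_order])
  obtain F where F: "\<forall>x. F x = U0 \<union> (\<Union>y\<in>underS aleph1 x. step (F y))"
    using well_order_cumulative_recursion[OF wo] by (rule exE)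
  have U0_small: "|U0| <o |I|" using cof \<open>countable U0\<close> by (rule countable_ordLess_cof_gt_aleph1)
  have card_underS: "|underS aleph1 x| \<le>o aleph1" for x
    by (rule ordLeq_transitive[OF card_of_mono1 card_of_Field_aleph1]) (auto dest: underS_Field)
  have F_small: "|F x| <o |I| \<and> U0 \<subseteq> F x \<and> F x \<subseteq> W" for x
  proof (induction x rule: wo_rel.well_order_induct[OF wo_rel.intro[OF wo]])
    case (1 x)
    have step_small: "step (F y) \<subseteq> W \<and> |step (F y)| <o |I|" if "y \<in> underS aleph1 x" for y
    proof -
      have "|F y| <o |I| \<and> U0 \<subseteq> F y \<and> F y \<subseteq> W" using 1 that unfolding underS_def by blast
      then show ?thesis using step by blast
    qed
    have "|\<Union>y\<in>underS aleph1 x. step (F y)| <o |I|"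
      by (rule card_of_UN_ordLess_cof_gt_aleph1[OF cof card_underS]) (use step_small in blast)
    then have "|F x| <o |I|" unfolding F[rule_format, of x]
      by (rule card_of_Un_ordLess_infinite[OF cof_gt_aleph1_infinite[OF cof] U0_small])
    moreover have "F x \<subseteq> W" using step_small \<open>U0 \<subseteq> W\<close> F[rule_format, of x] by blast
    ultimately show ?case using F[rule_format, of x] by blast
  qed
  have "|\<Union>x\<in>Field aleph1. step (F x)| <o |I|"
    by (rule card_of_UN_ordLess_cof_gt_aleph1[OF cof card_of_Field_aleph1])
      (use step F_small in blast)
  moreover have "step (F x) \<subseteq> F y" if "x \<in> underS aleph1 y" for x y
    using that F[rule_format, of y] by blast
  ultimately show ?thesis using F_small by (intro exI[of _ F]) blast
qed

section \<open>Separating sets\<close>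

definition separated_by :: "('i \<Rightarrow> 'v set) \<Rightarrow> ('i \<Rightarrow> 'v set) \<Rightarrow> 'v set \<Rightarrow> 'i set \<Rightarrow> bool" where
  "separated_by X K U J \<longleftrightarrow> (\<forall>j\<in>J. K j \<inter> U = {}) \<and>
     (\<forall>i\<in>J. \<forall>j\<in>J. i \<noteq> j \<longrightarrow> (X i - U) \<inter> (X j - U) = {})"

lemma separated_by_insert:
  assumes "separated_by X K U J" and "K i \<inter> U = {}" and "\<forall>j\<in>J. (X i - U) \<inter> (X j - U) = {}"
  shows "separated_by X K U (insert i J)"
  using assms unfolding separated_by_def by (simp add: Int_commute)

lemma exists_maximal_separated_by:
  "\<exists>J\<subseteq>I. separated_by X K U J \<and>
     (\<forall>i\<in>I - J. K i \<inter> U = {} \<longrightarrow> (\<exists>j\<in>J. (X i - U) \<inter> (X j - U) \<noteq> {}))"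
proof -
  let ?S = "{J. J \<subseteq> I \<and> separated_by X K U J}"
  have "\<Union>C \<in> ?S" if C: "C \<in> chains ?S" for C
  proof -
    have sep: "D \<subseteq> I \<and> separated_by X K U D" if "D \<in> C" for D
      using C that unfolding chains_def by blast
    have lin: "A \<subseteq> B \<or> B \<subseteq> A" if "A \<in> C" "B \<in> C" for A B
      using C that unfolding chains_def chain_subset_def by blast
    have common: "\<exists>D\<in>C. i \<in> D \<and> j \<in> D" if ij: "i \<in> \<Union>C" "j \<in> \<Union>C" for i j
    proof -
      obtain A B where "A \<in> C" "B \<in> C" "i \<in> A" "j \<in> B" using ij by blast
      then show ?thesis using lin[of A B] by blast
    qed
    show ?thesis unfolding mem_Collect_eq separated_by_def
    proof (intro conjI ballI impI)
      show "\<Union>C \<subseteq> I" using sep by blast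
      show "K j \<inter> U = {}" if "j \<in> \<Union>C" for j
        using that sep unfolding separated_by_def by blast
      show "(X i - U) \<inter> (X j - U) = {}" if "i \<in> \<Union>C" "j \<in> \<Union>C" "i \<noteq> j" for i j
        using common[OF that(1,2)] sep that(3) unfolding separated_by_def by blast
    qed
  qed
  then obtain M where M: "M \<in> ?S" and max: "\<forall>J\<in>?S. M \<subseteq> J \<longrightarrow> J = M"
    by (rule bexE[OF Zorn_Lemma[OF ballI]])
  have "\<exists>j\<in>M. (X i - U) \<inter> (X j - U) \<noteq> {}" if "i \<in> I - M" "K i \<inter> U = {}" for i
  proof (rule ccontr)
    assume "\<not> ?thesis"
    then have "separated_by X K U (insert i M)"
      using M that(2) by (intro separated_by_insert) auto
    then have "insert i M = M" using max M that(1) by blast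
    then show False using that(1) by blast
  qed
  then show ?thesis using M by blast
qed

lemma exists_index_avoiding:
  assumes "\<And>i j. i \<in> I \<Longrightarrow> j \<in> I \<Longrightarrow> i \<noteq> j \<Longrightarrow> K i \<inter> K j = {}"
    and "|S| <o |I|"
  shows "\<exists>i\<in>I. K i \<inter> S = {}"
proof (rule ccontr)
  assume "\<not> ?thesis"
  then have "\<forall>i\<in>I. \<exists>v. v \<in> K i \<inter> S" by blast
  then obtain f where f: "\<forall>i\<in>I. f i \<in> K i \<inter> S" by (rule bchoice[THEN exE])
  have "inj_on f I"
  proof (rule inj_onI, rule ccontr)
    fix i j assume ij: "i \<in> I" "j \<in> I" "f i = f j" "i \<noteq> j"
    then have "f i \<in> K i \<inter> K j" using f by (metis IntD1 IntI)
    then show False using assms(1)[OF ij(1,2,4)] by blast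
  qed
  moreover have "f ` I \<subseteq> S" using f by blast
  ultimately have "|I| \<le>o |S|" by (rule card_of_ordLeq[THEN iffD1, OF exI, OF conjI])
  with assms(2) show False using not_ordLess_ordLeq by blast
qed

lemma exists_separating_set:
  fixes I :: "'i set" and X K :: "'i \<Rightarrow> 'v set" and U0 :: "'v set"
  assumes cof: "cof_gt_aleph1 I"
    and countable_X: "\<And>i. i \<in> I \<Longrightarrow> countable (X i)"
    and K_X: "\<And>i. i \<in> I \<Longrightarrow> K i \<subseteq> X i" and K_nonempty: "\<And>i. i \<in> I \<Longrightarrow> K i \<noteq> {}"
    and K_disjoint: "\<And>i j. i \<in> I \<Longrightarrow> j \<in> I \<Longrightarrow> i \<noteq> j \<Longrightarrow> K i \<inter> K j = {}"
    and "countable U0"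
  shows "\<exists>U J. U0 \<subseteq> U \<and> U \<subseteq> U0 \<union> (\<Union>i\<in>I. X i) \<and> |U| <o |I| \<and>
    J \<subseteq> I \<and> |J| =o |I| \<and> separated_by X K U J"
proof (rule ccontr)
  assume no_separation: "\<not> ?thesis"
  define W where "W = U0 \<union> (\<Union>i\<in>I. X i)"
  have inf: "infinite I" by (rule cof_gt_aleph1_infinite[OF cof])
  obtain J where J: "\<forall>U. J U \<subseteq> I \<and> separated_by X K U (J U) \<and>
      (\<forall>i\<in>I - J U. K i \<inter> U = {} \<longrightarrow> (\<exists>j\<in>J U. (X i - U) \<inter> (X j - U) \<noteq> {}))"
    using choice[OF allI[OF exists_maximal_separated_by[of I X K]]] by (rule exE)
  have J_sub: "J U \<subseteq> I" and J_sep: "separated_by X K U (J U)"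
    and J_max: "\<And>i. i \<in> I \<Longrightarrow> i \<notin> J U \<Longrightarrow> K i \<inter> U = {} \<Longrightarrow> \<exists>j\<in>J U. (X i - U) \<inter> (X j - U) \<noteq> {}"
    for U using J by blast+
  have J_small: "|J U| <o |I|" if "U0 \<subseteq> U" "U \<subseteq> W" "|U| <o |I|" for U
  proof -
    have "\<not> |J U| =o |I|"
    proof
      assume "|J U| =o |I|"
      then have "U0 \<subseteq> U \<and> U \<subseteq> U0 \<union> (\<Union>i\<in>I. X i) \<and> |U| <o |I| \<and>
          J U \<subseteq> I \<and> |J U| =o |I| \<and> separated_by X K U (J U)"
        using that J_sub J_sep unfolding W_def by blast
      then show False using no_separation by blast
    qed
    then show ?thesis using card_of_mono1[OF J_sub] by (auto simp: ordLeq_iff_ordLess_or_ordIso)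
  qed
  define step where "step U = U \<union> (\<Union>j\<in>J U. X j)" for U
  have step_small: "step U \<subseteq> W \<and> |step U| <o |I|" if "U0 \<subseteq> U" "U \<subseteq> W" "|U| <o |I|" for U
  proof -
    have "|X j| \<le>o |UNIV :: nat set|" if "j \<in> J U" for j
      using countable_X[of j] J_sub that countable_card_of_nat by blast
    then have "|\<Union>j\<in>J U. X j| <o |I|"
      by (rule card_of_UN_ordLess_infinite[OF inf J_small[OF that]
            countable_ordLess_cof_gt_aleph1[OF cof countableI_type]])
    then have "|step U| <o |I|"
      unfolding step_def by (rule card_of_Un_ordLess_infinite[OF inf that(3)])
    moreover have "step U \<subseteq> W" using that(2) J_sub unfolding step_def W_def by blast
    ultimately show ?thesis by blast
  qed
  have step_meets: "X i \<inter> (step U - U) \<noteq> {}" if i: "i \<in> I" and avoid: "K i \<inter> step U = {}" for i U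
  proof -
    have "i \<notin> J U" using avoid K_X[OF i] K_nonempty[OF i] unfolding step_def by blast
    moreover have "K i \<inter> U = {}" using avoid unfolding step_def by blast
    ultimately obtain j where "j \<in> J U" "(X i - U) \<inter> (X j - U) \<noteq> {}" using J_max[OF i] by blast
    then show ?thesis unfolding step_def by blast
  qed
  have "U0 \<subseteq> W" unfolding W_def by blast
  have "\<exists>F. (\<forall>x. |F x| <o |I| \<and> U0 \<subseteq> F x \<and> F x \<subseteq> W) \<and>
      (\<forall>y. \<forall>x\<in>underS aleph1 y. step (F x) \<subseteq> F y) \<and> |\<Union>x\<in>Field aleph1. step (F x)| <o |I|"
    by (rule exists_small_aleph1_chain[OF cof \<open>countable U0\<close> \<open>U0 \<subseteq> W\<close>]) (rule step_small)
  then obtain F where F_chain: "\<forall>y. \<forall>x\<in>underS aleph1 y. step (F x) \<subseteq> F y"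
    and union_small: "|\<Union>x\<in>Field aleph1. step (F x)| <o |I|"
    by blast
  have "\<exists>i\<in>I. K i \<inter> (\<Union>x\<in>Field aleph1. step (F x)) = {}"
    by (rule exists_index_avoiding[OF _ union_small]) (rule K_disjoint)
  then obtain i where i: "i \<in> I" and avoid: "K i \<inter> (\<Union>x\<in>Field aleph1. step (F x)) = {}"
    by blast
  have "uncountable (X i)"
  proof (rule aleph1_increments_uncountable[of "\<lambda>x. step (F x)" F])
    show "step (F x) \<subseteq> F y" if "x \<in> underS aleph1 y" for x y using F_chain that by blast
    show "X i \<inter> (step (F x) - F x) \<noteq> {}" if "x \<in> Field aleph1" for x
    proof (rule step_meets[OF i])
      show "K i \<inter> step (F x) = {}" using avoid that by blast
    qed
  qed
  then show False using countable_X[OF i] by blast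
qed

section \<open>Paths and combs\<close>

lemma is_path_rev:
  assumes "graph V E" and "is_path V E p"
  shows "is_path V E (rev p)"
  unfolding is_path_def
proof (intro conjI allI impI)
  show "rev p \<noteq> []" "distinct (rev p)" "set (rev p) \<subseteq> V"
    using assms(2) unfolding is_path_def by auto
  fix i assume i: "Suc i < length (rev p)"
  define j where "j = length p - Suc (Suc i)"
  have "Suc j < length p" and "length p - Suc i = Suc j" using i unfolding j_def by auto
  moreover have "E (p ! j) (p ! Suc j)"
    using assms(2) \<open>Suc j < length p\<close> unfolding is_path_def by blast
  then have "E (p ! Suc j) (p ! j)" using assms(1) unfolding graph_def by blast
  ultimately show "E (rev p ! i) (rev p ! Suc i)" using i by (simp add: rev_nth j_def)
qed

lemma is_path_take:
  assumes "is_path V E p" and "0 < n"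
  shows "is_path V E (take n p)"
  unfolding is_path_def
proof (intro conjI allI impI)
  show "take n p \<noteq> []" "distinct (take n p)" "set (take n p) \<subseteq> V"
    using assms set_take_subset[of n p] unfolding is_path_def by auto
  fix i assume "Suc i < length (take n p)"
  then show "E (take n p ! i) (take n p ! Suc i)" using assms(1) unfolding is_path_def by simp
qed

definition truncate_at :: "'v set \<Rightarrow> 'v list \<Rightarrow> 'v list" where
  "truncate_at U p = take (Suc (length (takeWhile (\<lambda>v. v \<notin> U) p))) p"

lemma truncate_at_path:
  assumes path: "is_path V E p" and meets: "set p \<inter> U \<noteq> {}"
  shows "is_path V E (truncate_at U p)" and "set (truncate_at U p) \<subseteq> set p"
    and "hd (truncate_at U p) = hd p" and "set (truncate_at U p) \<inter> U = {last (truncate_at U p)}"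
proof -
  let ?n = "length (takeWhile (\<lambda>v. v \<notin> U) p)"
  have prefix: "take ?n p = takeWhile (\<lambda>v. v \<notin> U) p" by (rule takeWhile_eq_take[symmetric])
  have "?n < length p"
  proof (rule ccontr)
    assume "\<not> ?n < length p"
    then have "takeWhile (\<lambda>v. v \<notin> U) p = p" using prefix by simp
    then show False using meets takeWhile_eq_all_conv[of "\<lambda>v. v \<notin> U" p] by blast
  qed
  then have last_in: "p ! ?n \<in> U" using nth_length_takeWhile[of "\<lambda>v. v \<notin> U" p] by simp
  have split: "truncate_at U p = takeWhile (\<lambda>v. v \<notin> U) p @ [p ! ?n]"
    unfolding truncate_at_def take_Suc_conv_app_nth[OF \<open>?n < length p\<close>] prefix ..
  show "is_path V E (truncate_at U p)"
    unfolding truncate_at_def using path by (rule is_path_take) simp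
  show "set (truncate_at U p) \<subseteq> set p" unfolding truncate_at_def by (rule set_take_subset)
  show "hd (truncate_at U p) = hd p" unfolding truncate_at_def by simp
  show "set (truncate_at U p) \<inter> U = {last (truncate_at U p)}"
    unfolding split using last_in by (auto dest: set_takeWhileD)
qed

lemma AB_path_ends:
  assumes "AB_path V E A B p"
  shows "p \<noteq> []" and "last p \<in> B" and "set p \<subseteq> V"
  using assms unfolding AB_path_def is_path_def by blast+

lemma AB_path_truncate_at_rev:
  assumes "graph V E" and "AB_path V E A B p" and "A \<subseteq> U"
  shows "AB_path V E B U (truncate_at U (rev p))" and "set (truncate_at U (rev p)) \<subseteq> set p"
proof -
  have p: "is_path V E p" "set p \<inter> A = {hd p}" "set p \<inter> B = {last p}"
    using assms(2) unfolding AB_path_def by blast+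
  have "p \<noteq> []" using assms(2) by (rule AB_path_ends)
  have rev: "is_path V E (rev p)" using assms(1) p(1) by (rule is_path_rev)
  have "set (rev p) \<inter> U \<noteq> {}" using p(2) assms(3) by auto
  note trunc = truncate_at_path[OF rev this]
  let ?t = "truncate_at U (rev p)"
  show sub: "set ?t \<subseteq> set p" using trunc(2) by simp
  have hd: "hd ?t = last p" using trunc(3) \<open>p \<noteq> []\<close> by (simp add: hd_rev)
  have "?t \<noteq> []" using trunc(1) unfolding is_path_def by blast
  then have "hd ?t \<in> set ?t \<inter> B" using hd_in_set[of ?t] hd p(3) by auto
  moreover have "set ?t \<inter> B \<subseteq> {hd ?t}" using sub p(3) hd by auto
  ultimately have "set ?t \<inter> B = {hd ?t}" by blast
  then show "AB_path V E B U ?t" unfolding AB_path_def using trunc(1,4) by blast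
qed

lemma countable_disjoint_paths:
  assumes "disjoint_paths P" and "\<And>p. p \<in> P \<Longrightarrow> p \<noteq> [] \<and> last p \<in> S" and "countable S"
  shows "countable P"
proof -
  have "last ` P \<subseteq> S" using assms(2) by blast
  then have "countable (last ` P)" using assms(3) by (rule countable_subset)
  moreover have "inj_on last P"
  proof (rule inj_onI, rule ccontr)
    fix p q assume pq: "p \<in> P" "q \<in> P" "last p = last q" "p \<noteq> q"
    then have "set p \<inter> set q = {}" using assms(1) unfolding disjoint_paths_def by auto
    moreover have "last p \<in> set p" "last q \<in> set q" using assms(2) pq(1,2) by simp_all
    ultimately show False using pq(3) by auto
  qed
  ultimately show ?thesis by (rule countable_image_inj_on)
qed

lemma countable_ray_paths:
  assumes "is_ray V E R" and "disjoint_paths P" and "\<forall>p\<in>P. AB_path V E A (range R) p"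
  shows "countable (range R \<union> \<Union>(set ` P))" and "range R \<union> \<Union>(set ` P) \<subseteq> V"
proof -
  note paths = bspec[OF assms(3)]
  have "countable P"
    using assms(2) by (rule countable_disjoint_paths[where S = "range R"])
      (use AB_path_ends[OF paths] in auto)
  then show "countable (range R \<union> \<Union>(set ` P))" by (auto intro: countable_finite)
  show "range R \<union> \<Union>(set ` P) \<subseteq> V"
    using assms(1) AB_path_ends(3)[OF paths] unfolding is_ray_def by blast
qed

lemma end_rays_linked:
  assumes "is_end V E \<epsilon>"
  obtains R0 P where "is_ray V E R0" and "\<And>R. R \<in> \<epsilon> \<Longrightarrow> is_ray V E R \<and> infinite (P R) \<and>
    disjoint_paths (P R) \<and> (\<forall>p\<in>P R. AB_path V E (range R0) (range R) p)"
proof -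
  obtain R0 where R0: "is_ray V E R0" and \<epsilon>: "\<epsilon> = {R. is_ray V E R \<and> rays_equiv V E R0 R}"
    using assms unfolding is_end_def by blast
  have "\<forall>R\<in>\<epsilon>. \<exists>P. is_ray V E R \<and> infinite P \<and> disjoint_paths P \<and>
      (\<forall>p\<in>P. AB_path V E (range R0) (range R) p)"
    unfolding \<epsilon> rays_equiv_def by blast
  then obtain P where "\<forall>R\<in>\<epsilon>. is_ray V E R \<and> infinite (P R) \<and> disjoint_paths (P R) \<and>
      (\<forall>p\<in>P R. AB_path V E (range R0) (range R) p)"
    by (rule bchoice[THEN exE])
  with R0 show thesis using that by blast
qed

lemma comb_truncate_at_rev:
  assumes "graph V E" and "R \<in> \<epsilon>" and "range R \<inter> U = {}" and "A \<subseteq> U"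
    and "infinite P" and "disjoint_paths P" and paths: "\<And>p. p \<in> P \<Longrightarrow> AB_path V E A (range R) p"
  shows "is_comb V E \<epsilon> U (R, (truncate_at U \<circ> rev) ` P)"
    and "comb_interior U (R, (truncate_at U \<circ> rev) ` P) \<subseteq> (range R \<union> \<Union>(set ` P)) - U"
proof -
  let ?t = "truncate_at U \<circ> rev"
  have tooth: "AB_path V E (range R) U (?t p)" and sub: "set (?t p) \<subseteq> set p" if "p \<in> P" for p
    using AB_path_truncate_at_rev[OF assms(1) paths[OF that] assms(4)] by simp_all
  have nonempty: "?t p \<noteq> []" if "p \<in> P" for p
    using tooth[OF that] unfolding AB_path_def is_path_def by blast
  have disjoint: "set (?t p) \<inter> set (?t q) = {}" if "p \<in> P" "q \<in> P" "p \<noteq> q" for p q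
  proof -
    have "set p \<inter> set q = {}" using assms(6) that unfolding disjoint_paths_def by auto
    then show ?thesis using sub[OF that(1)] sub[OF that(2)] by blast
  qed
  have "inj_on ?t P"
  proof (rule inj_onI, rule ccontr)
    fix p q assume "p \<in> P" "q \<in> P" "?t p = ?t q" "p \<noteq> q"
    then have "set (?t p) = {}" using disjoint[of p q] by simp
    then show False using nonempty \<open>p \<in> P\<close> by simp
  qed
  then have "infinite (?t ` P)" using assms(5) finite_imageD by blast
  moreover have "disjoint_paths (?t ` P)" using disjoint by (fastforce simp: disjoint_paths_def)
  ultimately show "is_comb V E \<epsilon> U (R, ?t ` P)"
    unfolding is_comb_def using assms(2,3) tooth by auto
  show "comb_interior U (R, ?t ` P) \<subseteq> (range R \<union> \<Union>(set ` P)) - U"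
    unfolding comb_interior_def using sub by fastforce
qed

lemma exists_internally_disjoint_combs:
  assumes "graph V E" and "J \<subseteq> \<epsilon>" and "A \<subseteq> U"
    and P: "\<forall>R\<in>J. infinite (P R) \<and> disjoint_paths (P R) \<and> (\<forall>p\<in>P R. AB_path V E A (range R) p)"
    and X: "\<forall>R\<in>J. range R \<union> \<Union>(set ` P R) \<subseteq> X R" and sep: "separated_by X range U J"
  shows "\<exists>\<C>. |\<C>| =o |J| \<and> (\<forall>C\<in>\<C>. is_comb V E \<epsilon> U C \<and> fst C \<in> J) \<and>
    (\<forall>C\<in>\<C>. \<forall>D\<in>\<C>. C \<noteq> D \<longrightarrow> comb_interior U C \<inter> comb_interior U D = {})"
proof -
  define comb where "comb R = (R, (truncate_at U \<circ> rev) ` P R)" for R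
  have comb: "is_comb V E \<epsilon> U (comb R)"
    and interior: "comb_interior U (comb R) \<subseteq> X R - U" if R: "R \<in> J" for R
  proof -
    have "R \<in> \<epsilon>" using assms(2) R by blast
    have "range R \<inter> U = {}" using sep R unfolding separated_by_def by blast
    have "infinite (P R)" "disjoint_paths (P R)"
      and paths: "\<And>p. p \<in> P R \<Longrightarrow> AB_path V E A (range R) p"
      using P R by blast+
    note teeth = comb_truncate_at_rev[OF assms(1) \<open>R \<in> \<epsilon>\<close> \<open>range R \<inter> U = {}\<close> assms(3)
        \<open>infinite (P R)\<close> \<open>disjoint_paths (P R)\<close> paths]
    show "is_comb V E \<epsilon> U (comb R)" unfolding comb_def by (rule teeth(1))
    show "comb_interior U (comb R) \<subseteq> X R - U" using teeth(2) X R unfolding comb_def by blast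
  qed
  show ?thesis
  proof (intro exI conjI)
    have "inj_on comb J" unfolding comb_def by (rule inj_onI) simp
    then have "|J| =o |comb ` J|"
      unfolding card_of_ordIso[symmetric] by (blast intro: inj_on_imp_bij_betw)
    then show "|comb ` J| =o |J|" by (rule ordIso_symmetric)
    have "fst (comb R) = R" for R unfolding comb_def by simp
    then show "\<forall>C\<in>comb ` J. is_comb V E \<epsilon> U C \<and> fst C \<in> J" using comb by auto
    show "\<forall>C\<in>comb ` J. \<forall>D\<in>comb ` J. C \<noteq> D \<longrightarrow> comb_interior U C \<inter> comb_interior U D = {}"
    proof (intro ballI impI)
      fix C D assume "C \<in> comb ` J" "D \<in> comb ` J" "C \<noteq> D"
      then obtain R R' where RR': "R \<in> J" "R' \<in> J" "R \<noteq> R'" and "C = comb R" "D = comb R'" by blast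
      then have "(X R - U) \<inter> (X R' - U) = {}"
        using sep unfolding separated_by_def by blast
      then show "comb_interior U C \<inter> comb_interior U D = {}"
        unfolding \<open>C = comb R\<close> \<open>D = comb R'\<close> using interior[OF RR'(1)] interior[OF RR'(2)] by blast
    qed
  qed
qed

theorem lemma2p2:
  fixes V :: "'v set" and E :: "'v \<Rightarrow> 'v \<Rightarrow> bool"
    and \<epsilon> :: "(nat \<Rightarrow> 'v) set" and \<R> :: "(nat \<Rightarrow> 'v) set"
  assumes "graph V E"
    and "is_end V E \<epsilon>"
    and "cof_gt_aleph1 \<R>"
    and "\<R> \<subseteq> \<epsilon>"
    and "\<forall>R\<in>\<R>. \<forall>R'\<in>\<R>. R \<noteq> R' \<longrightarrow> range R \<inter> range R' = {}"
  shows "\<exists>U \<C>. U \<subseteq> V \<and> (card_of U, card_of \<R>) \<in> ordLess \<and>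
     (card_of \<C>, card_of \<R>) \<in> ordIso \<and>
     (\<forall>C\<in>\<C>. is_comb V E \<epsilon> U C \<and> fst C \<in> \<R>) \<and>
     (\<forall>C\<in>\<C>. \<forall>D\<in>\<C>. C \<noteq> D \<longrightarrow> comb_interior U C \<inter> comb_interior U D = {})"
proof -
  obtain R0 P where R0: "is_ray V E R0" and P: "\<And>R. R \<in> \<epsilon> \<Longrightarrow> is_ray V E R \<and> infinite (P R) \<and>
      disjoint_paths (P R) \<and> (\<forall>p\<in>P R. AB_path V E (range R0) (range R) p)"
    using end_rays_linked[OF assms(2)] by blast
  define X where "X R = range R \<union> \<Union>(set ` P R)" for R
  have X: "countable (X R) \<and> X R \<subseteq> V" if "R \<in> \<R>" for R
  proof -
    have "is_ray V E R \<and> disjoint_paths (P R) \<and> (\<forall>p\<in>P R. AB_path V E (range R0) (range R) p)"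
      using P assms(4) that by blast
    then show ?thesis unfolding X_def using countable_ray_paths[of V E R "P R" "range R0"] by simp
  qed
  have "\<exists>U J. range R0 \<subseteq> U \<and> U \<subseteq> range R0 \<union> (\<Union>R\<in>\<R>. X R) \<and> |U| <o |\<R>| \<and>
      J \<subseteq> \<R> \<and> |J| =o |\<R>| \<and> separated_by X range U J"
  proof (rule exists_separating_set[of \<R> X range "range R0"])
    show "countable (X R)" if "R \<in> \<R>" for R using X that by blast
    show "range R \<subseteq> X R" for R unfolding X_def by blast
    show "range R \<inter> range R' = {}" if "R \<in> \<R>" "R' \<in> \<R>" "R \<noteq> R'" for R R'
      using assms(5) that by blast
  qed (use assms(3) in simp_all)
  then obtain U J where R0_U: "range R0 \<subseteq> U" and U_sub: "U \<subseteq> range R0 \<union> (\<Union>R\<in>\<R>. X R)"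
    and "|U| <o |\<R>|" and J_sub: "J \<subseteq> \<R>" and J_card: "|J| =o |\<R>|"
    and J_sep: "separated_by X range U J"
    by blast
  have "\<forall>R\<in>J. infinite (P R) \<and> disjoint_paths (P R) \<and> (\<forall>p\<in>P R. AB_path V E (range R0) (range R) p)"
    using P J_sub assms(4) by blast
  moreover have "\<forall>R\<in>J. range R \<union> \<Union>(set ` P R) \<subseteq> X R" unfolding X_def by blast
  ultimately obtain \<C> where C_card: "|\<C>| =o |J|" and combs: "\<forall>C\<in>\<C>. is_comb V E \<epsilon> U C \<and> fst C \<in> J"
    and "\<forall>C\<in>\<C>. \<forall>D\<in>\<C>. C \<noteq> D \<longrightarrow> comb_interior U C \<inter> comb_interior U D = {}"
    using exists_internally_disjoint_combs[OF assms(1) order_trans[OF J_sub assms(4)] R0_U _ _ J_sep]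
    by blast
  moreover have "|\<C>| =o |\<R>|" using C_card J_card by (rule ordIso_transitive)
  moreover have "\<forall>C\<in>\<C>. is_comb V E \<epsilon> U C \<and> fst C \<in> \<R>" using combs J_sub by blast
  moreover have "U \<subseteq> V"
  proof -
    have "range R0 \<subseteq> V" using R0 unfolding is_ray_def by blast
    moreover have "(\<Union>R\<in>\<R>. X R) \<subseteq> V" using X by blast
    ultimately show ?thesis using U_sub by blast
  qed
  ultimately show ?thesis using \<open>|U| <o |\<R>|\<close> by blast
qed

end
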